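(* Let $\pi_0\neq\pi_1$ be two primes. Then there exist uncountably many irrational real numbers $x$ with the following property: if $(q_s)_{s\ge0}$ denotes the sequence of denominators of the convergents of $x$, then for every $s\ge0$, $q_{2s}$ is a power of $\pi_0$ and $q_{2s+1}$ is a power of $\pi_1$ (with exponent $\ge1$ for $s\ge1$ resp. $s\ge0$). In particular, each $q_s$ with $s\ge1$ is divisible only by primes in $\{\pi_0,\pi_1\}$.
   Context: For an irrational $x$ with continued fraction expansion $[a_0;a_1,a_2,\dots]$, the convergents are $p_s/q_s$. They are defined by $p_{-1}=1$, $p_0=a_0$, $q_{-1}=0$, $q_0=1$, and for $s\ge1$, $p_s=a_sp_{s-1}+p_{s-2}$ and $q_s=a_sq_{s-1}+q_{s-2}$. *)

theory Defs
  imports Complex_Main "HOL-Library.Countable_Set" "HOL-Computational_Algebra.Primes"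
begin

fun cf_rem :: "real \<Rightarrow> nat \<Rightarrow> real" where
  "cf_rem x 0 = x"
| "cf_rem x (Suc n) = 1 / (cf_rem x n - of_int \<lfloor>cf_rem x n\<rfloor>)"

definition cf_coeff :: "real \<Rightarrow> nat \<Rightarrow> int" where
  "cf_coeff x n = \<lfloor>cf_rem x n\<rfloor>"

text \<open>Denominators of the convergents: q_(-1) = 0, q_0 = 1,
  q_s = a_s q_(s-1) + q_(s-2).\<close>
fun cf_den :: "real \<Rightarrow> nat \<Rightarrow> int" where
  "cf_den x 0 = 1"
| "cf_den x (Suc 0) = cf_coeff x 1"
| "cf_den x (Suc (Suc n)) = cf_coeff x (Suc (Suc n)) * cf_den x (Suc n) + cf_den x n"

end

theory Submission
  imports Defs "HOL-Number_Theory.Residues"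
begin

(*
  A sequence of integers Q with Q 0 = 1 and Q n > 0 is the sequence of
  convergent denominators of some irrational number as soon as, for every n,
  Q (n+1) divides Q (n+2) - Q n and Q n < Q (n+2): the partial quotients are then
  a_n = (Q n - Q (n-2)) / Q (n-1) >= 1, and the infinite continued fraction with
  these partial quotients does the job.  To obtain denominators that are
  alternately powers of p0 and of p1 we choose exponents recursively with
  E (n+2) = E n + f * totient (R ^ E (n+1)), where R is the prime of index n+1 and
  f is 1 or 2; Euler's theorem gives the required divisibility.  The free choice of
  f at every step embeds the uncountable set of all sets of naturals injectively.
*)


section \<open>Infinite continued fractions with partial quotients at least one\<close>

fun cf_value :: "(nat \<Rightarrow> real) \<Rightarrow> nat \<Rightarrow> real" where
  "cf_value a 0 = a 0"
| "cf_value a (Suc m) = a 0 + 1 / cf_value (\<lambda>i. a (Suc i)) m"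

lemma cf_value_bounds:
  assumes "\<forall>i. a i \<ge> 1"
  shows "a 0 \<le> cf_value a m \<and> cf_value a m \<le> a 0 + 1"
  using assms
proof (induction m arbitrary: a)
  case 0
  then show ?case by simp
next
  case (Suc m)
  have tail: "\<forall>i. a (Suc i) \<ge> 1" using Suc.prems by simp
  have "cf_value (\<lambda>i. a (Suc i)) m \<ge> 1"
    using Suc.IH[OF tail] tail by (meson order_trans)
  then have "0 \<le> 1 / cf_value (\<lambda>i. a (Suc i)) m" "1 / cf_value (\<lambda>i. a (Suc i)) m \<le> 1"
    by auto
  then show ?case by simp
qed

lemma cf_value_ge_1: "\<forall>i. a i \<ge> 1 \<Longrightarrow> cf_value a m \<ge> 1"
  using cf_value_bounds[of a m] by (meson order_trans)

text \<open>The map u \<mapsto> 1 / (b + 1/u) contracts distances on [1,\<infinity>) by the factor 1/4 when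
  b \<ge> 1.  Two steps of the continued fraction recursion are such a map.\<close>
lemma two_step_contraction:
  fixes b u v :: real
  assumes "b \<ge> 1" "u \<ge> 1" "v \<ge> 1"
  shows "\<bar>1 / (b + 1 / u) - 1 / (b + 1 / v)\<bar> \<le> \<bar>u - v\<bar> / 4"
proof -
  have "b * u \<ge> b" "b * v \<ge> b"
    using mult_left_mono[of 1 u b] mult_left_mono[of 1 v b] assms by simp_all
  then have den: "b * u + 1 \<ge> 2" "b * v + 1 \<ge> 2" using assms by linarith+
  have "1 / (b + 1 / u) - 1 / (b + 1 / v) = (u - v) / ((b * u + 1) * (b * v + 1))"
    using assms den by (simp add: field_simps)
  moreover have four: "(b * u + 1) * (b * v + 1) \<ge> 2 * 2"
    using den by (intro mult_mono) auto
  ultimately have "\<bar>1 / (b + 1 / u) - 1 / (b + 1 / v)\<bar> = \<bar>u - v\<bar> / ((b * u + 1) * (b * v + 1))"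
    by (simp add: abs_divide)
  also have "\<dots> \<le> \<bar>u - v\<bar> / 4"
    using four by (intro divide_left_mono) auto
  finally show ?thesis .
qed

lemma cf_value_close:
  assumes "\<forall>i. a i \<ge> 1" "m \<ge> 2 * k" "m' \<ge> 2 * k"
  shows "\<bar>cf_value a m - cf_value a m'\<bar> \<le> (1/4) ^ k"
  using assms
proof (induction k arbitrary: a m m')
  case 0
  then show ?case using cf_value_bounds[of a m] cf_value_bounds[of a m'] by auto
next
  case (Suc k)
  define n n' where "n = m - 2" and "n' = m' - 2"
  have m: "m = Suc (Suc n)" "n \<ge> 2 * k" and m': "m' = Suc (Suc n')" "n' \<ge> 2 * k"
    using Suc.prems(2,3) by (auto simp: n_def n'_def)
  define b where "b = (\<lambda>i. a (Suc (Suc i)))"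
  have b: "\<forall>i. b i \<ge> 1" using Suc.prems(1) by (simp add: b_def)
  have "\<bar>cf_value a m - cf_value a m'\<bar>
      = \<bar>1 / (a 1 + 1 / cf_value b n) - 1 / (a 1 + 1 / cf_value b n')\<bar>"
    by (simp add: m m' b_def)
  also have "\<dots> \<le> \<bar>cf_value b n - cf_value b n'\<bar> / 4"
    using Suc.prems(1) cf_value_ge_1[OF b] by (intro two_step_contraction) auto
  also have "\<dots> \<le> (1/4) ^ k / 4"
    using Suc.IH[OF b m(2) m'(2)] by simp
  finally show ?case by simp
qed

lemma cf_value_Cauchy:
  assumes "\<forall>i. a i \<ge> 1"
  shows "Cauchy (cf_value a)"
proof (rule CauchyI)
  fix e :: real
  assume "e > 0"
  then obtain k where k: "(1/4::real) ^ k < e" using real_arch_pow_inv[of e "1/4"] by auto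
  show "\<exists>M. \<forall>m\<ge>M. \<forall>n\<ge>M. norm (cf_value a m - cf_value a n) < e"
    using cf_value_close[OF assms] k by (intro exI[of _ "2 * k"]) (auto intro: le_less_trans)
qed

definition cf_limit :: "(nat \<Rightarrow> real) \<Rightarrow> real" where
  "cf_limit a = lim (cf_value a)"

lemma cf_limit_LIMSEQ: "\<forall>i. a i \<ge> 1 \<Longrightarrow> cf_value a \<longlonglongrightarrow> cf_limit a"
  unfolding cf_limit_def using cf_value_Cauchy Cauchy_convergent convergent_LIMSEQ_iff by blast

lemma cf_limit_ge_1: "\<forall>i. a i \<ge> 1 \<Longrightarrow> cf_limit a \<ge> 1"
  by (rule LIMSEQ_le_const[OF cf_limit_LIMSEQ]) (auto intro: cf_value_ge_1)

lemma cf_limit_rec: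
  assumes "\<forall>i. a i \<ge> 1"
  shows "cf_limit a = a 0 + 1 / cf_limit (\<lambda>i. a (Suc i))"
proof -
  have tail: "\<forall>i. a (Suc i) \<ge> 1" using assms by auto
  have "(\<lambda>m. cf_value a (Suc m)) \<longlonglongrightarrow> cf_limit a"
    using LIMSEQ_Suc[OF cf_limit_LIMSEQ[OF assms]] .
  moreover have "(\<lambda>m. cf_value a (Suc m)) \<longlonglongrightarrow> a 0 + 1 / cf_limit (\<lambda>i. a (Suc i))"
    unfolding cf_value.simps using cf_limit_ge_1[OF tail] cf_limit_LIMSEQ[OF tail]
    by (intro tendsto_intros) auto
  ultimately show ?thesis by (rule LIMSEQ_unique)
qed

text \<open>Since the tail is again an infinite continued fraction, it is strictly bigger than 1,
  so the leading partial quotient is the integer part.\<close>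
lemma cf_limit_strict_bounds:
  assumes "\<forall>i. a i \<ge> 1"
  shows "a 0 < cf_limit a \<and> cf_limit a < a 0 + 1"
proof -
  have tail: "\<forall>i. a (Suc i) \<ge> 1" and tail2: "\<forall>i. a (Suc (Suc i)) \<ge> 1" using assms by auto
  have "cf_limit (\<lambda>i. a (Suc i)) = a 1 + 1 / cf_limit (\<lambda>i. a (Suc (Suc i)))"
    using cf_limit_rec[OF tail] by simp
  moreover have "1 / cf_limit (\<lambda>i. a (Suc (Suc i))) > 0" using cf_limit_ge_1[OF tail2] by simp
  moreover have "a 1 \<ge> 1" using assms by simp
  ultimately have "cf_limit (\<lambda>i. a (Suc i)) > 1" by linarith
  then have "0 < 1 / cf_limit (\<lambda>i. a (Suc i))" "1 / cf_limit (\<lambda>i. a (Suc i)) < 1" by auto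
  then show ?thesis using cf_limit_rec[OF assms] by linarith
qed


section \<open>The continued fraction algorithm on integer partial quotients\<close>

lemma cf_rem_cf_limit:
  fixes A :: "nat \<Rightarrow> int"
  assumes "\<forall>i. A i \<ge> 1"
  shows "cf_rem (cf_limit (\<lambda>i. of_int (A i))) n = cf_limit (\<lambda>i. of_int (A (i + n)))"
proof (induction n)
  case 0
  then show ?case by simp
next
  case (Suc n)
  have shifted: "\<And>n. \<forall>i. (of_int (A (i + n)) :: real) \<ge> 1" using assms by simp
  have floor: "\<lfloor>cf_limit (\<lambda>i. of_int (A (i + n)))\<rfloor> = A n"
    using cf_limit_strict_bounds[OF shifted[of n]] by (simp add: floor_eq_iff)
  have rec: "cf_limit (\<lambda>i. of_int (A (i + n))) = of_int (A n) + 1 / cf_limit (\<lambda>i. of_int (A (i + Suc n)))"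
    using cf_limit_rec[OF shifted[of n]] by simp
  have "cf_rem (cf_limit (\<lambda>i. of_int (A i))) (Suc n)
      = 1 / (cf_limit (\<lambda>i. of_int (A (i + n))) - of_int (A n))"
    by (simp add: Suc.IH floor)
  also have "\<dots> = cf_limit (\<lambda>i. of_int (A (i + Suc n)))"
    using cf_limit_ge_1[OF shifted[of "Suc n"]] by (subst rec) simp
  finally show ?case .
qed

lemma cf_coeff_cf_limit:
  fixes A :: "nat \<Rightarrow> int"
  assumes "\<forall>i. A i \<ge> 1"
  shows "cf_coeff (cf_limit (\<lambda>i. of_int (A i))) n = A n"
proof -
  have "\<forall>i. (of_int (A (i + n)) :: real) \<ge> 1" using assms by simp
  from cf_limit_strict_bounds[OF this]
  show ?thesis unfolding cf_coeff_def cf_rem_cf_limit[OF assms] by (simp add: floor_eq_iff)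
qed

text \<open>One step of the descent behind irrationality: if q t is an integer but t is not,
  then a strictly smaller positive multiple of the next complete quotient is an integer.\<close>
lemma complete_quotient_descent:
  fixes t :: real and q :: nat
  assumes "q > 0" "of_nat q * t \<in> \<int>" "t \<notin> \<int>"
  shows "\<exists>q'. 0 < q' \<and> q' < q \<and> of_nat q' * (1 / (t - of_int \<lfloor>t\<rfloor>)) \<in> \<int>"
proof -
  obtain N where N: "of_nat q * t = of_int N" using assms(2) by (metis Ints_cases)
  have "t \<noteq> of_int \<lfloor>t\<rfloor>" using assms(3) by (metis Ints_of_int)
  then have frac: "0 < t - of_int \<lfloor>t\<rfloor>" "t - of_int \<lfloor>t\<rfloor> < 1"
    using of_int_floor_le[of t] by linarith+
  define r where "r = N - int q * \<lfloor>t\<rfloor>"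
  have r: "of_int r = of_nat q * (t - of_int \<lfloor>t\<rfloor>)"
    unfolding r_def using N by (simp add: algebra_simps)
  have "(0::real) < of_int r" "of_int r < real q"
    using r frac assms(1) by simp_all
  then have "0 < r" "r < int q" by linarith+
  moreover have "of_nat (nat r) * (1 / (t - of_int \<lfloor>t\<rfloor>)) = (of_nat q :: real)"
    using r \<open>0 < r\<close> frac by (simp add: field_simps)
  ultimately show ?thesis by (intro exI[of _ "nat r"]) auto
qed

text \<open>A real number none of whose complete quotients is an integer is irrational: for a
  rational number the least positive q with q times a complete quotient integral would
  descend forever.\<close>
lemma irrational_if_complete_quotients_not_integer:
  fixes y :: real
  assumes "\<forall>n. cf_rem y n \<notin> \<int>"
  shows "y \<notin> \<rat>"
proof
  assume "y \<in> \<rat>"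
  then obtain a b where ab: "b > 0" "y = of_int a / of_int b" by (metis Rats_cases')
  have no_integral_multiple: "0 < q \<Longrightarrow> of_nat q * cf_rem y n \<notin> \<int>" for q n
  proof (induction q arbitrary: n rule: less_induct)
    case (less q)
    show ?case
    proof
      assume "of_nat q * cf_rem y n \<in> \<int>"
      then obtain q' where "0 < q'" "q' < q" "of_nat q' * cf_rem y (Suc n) \<in> \<int>"
        using complete_quotient_descent[OF less.prems _ assms[rule_format, of n]] by auto
      then show False using less.IH by blast
    qed
  qed
  have "of_nat (nat b) * cf_rem y 0 \<in> \<int>" using ab by simp
  then show False using no_integral_multiple[of "nat b" 0] ab by simp
qed

lemma cf_limit_irrational:
  fixes A :: "nat \<Rightarrow> int"
  assumes "\<forall>i. A i \<ge> 1"
  shows "cf_limit (\<lambda>i. of_int (A i)) \<notin> \<rat>"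
proof (rule irrational_if_complete_quotients_not_integer, intro allI notI)
  fix n
  have tail: "\<forall>i. (of_int (A (i + n)) :: real) \<ge> 1" using assms by simp
  assume "cf_rem (cf_limit (\<lambda>i. of_int (A i))) n \<in> \<int>"
  then obtain z where "cf_limit (\<lambda>i. of_int (A (i + n))) = of_int z"
    using cf_rem_cf_limit[OF assms] by (auto elim: Ints_cases)
  then have "A n < z" "z < A n + 1" using cf_limit_strict_bounds[OF tail] by simp_all
  then show False by simp
qed


section \<open>Which sequences are sequences of convergent denominators\<close>

text \<open>A positive integer sequence starting with 1 in which Q (n+1) divides Q (n+2) - Q n
  and Q n < Q (n+2) is the denominator sequence of an irrational number, namely of the
  continued fraction whose partial quotients are the quotients of these divisions.\<close>
lemma denominator_sequence_realizable:
  fixes Q :: "nat \<Rightarrow> int"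
  assumes Q0: "Q 0 = 1" and pos: "\<And>n. Q n > 0"
    and dvd: "\<And>n. Q (Suc n) dvd Q (Suc (Suc n)) - Q n"
    and incr: "\<And>n. Q n < Q (Suc (Suc n))"
  shows "\<exists>x. x \<notin> \<rat> \<and> cf_den x = Q"
proof -
  define A where "A n = (if n = 0 then 1 else if n = 1 then Q 1
                          else (Q n - Q (n - 2)) div Q (n - 1))" for n
  have A_rec: "Q (Suc (Suc n)) = A (Suc (Suc n)) * Q (Suc n) + Q n" for n
    using dvd[of n] by (simp add: A_def)
  have A_ge_1: "\<forall>n. A n \<ge> 1"
  proof
    fix n
    show "A n \<ge> 1"
    proof (cases "n \<le> 1")
      case True
      then show ?thesis using pos[of 1] by (auto simp: A_def le_Suc_eq)
    next
      case False
      have "\<exists>k. n = Suc (Suc k)" using False by presburger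
      then obtain k where k: "n = Suc (Suc k)" by blast
      have "A n * Q (Suc k) > 0" using A_rec[of k] incr[of k] k by simp
      then show ?thesis using pos[of "Suc k"] by (simp add: zero_less_mult_iff)
    qed
  qed
  have "cf_den (cf_limit (\<lambda>i. of_int (A i))) n = Q n" for n
  proof (induction "cf_limit (\<lambda>i. of_int (A i))" n rule: cf_den.induct)
    case 1
    show ?case using Q0 by simp
  next
    case 2
    show ?case unfolding cf_den.simps cf_coeff_cf_limit[OF A_ge_1] by (simp add: A_def)
  next
    case (3 n)
    then show ?case using A_rec[of n] by (simp add: cf_coeff_cf_limit[OF A_ge_1])
  qed
  then show ?thesis using cf_limit_irrational[OF A_ge_1] by blast
qed


section \<open>Denominators that are alternately powers of two given primes\<close>

text \<open>By Euler's theorem, if P is coprime to R then raising the exponent of P by a multiple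
  of totient (R^i) does not change P^j modulo R^i.\<close>
lemma power_shift_by_totient_dvd:
  fixes P R :: nat
  assumes "coprime P R"
  shows "int (R ^ i) dvd int (P ^ (j + m * totient (R ^ i))) - int (P ^ j)"
proof -
  have "[P ^ totient (R ^ i) = 1] (mod R ^ i)"
    using assms by (intro euler_theorem) simp
  then have "[P ^ j * (P ^ totient (R ^ i)) ^ m = P ^ j * 1 ^ m] (mod R ^ i)"
    by (intro cong_scalar_left cong_pow)
  moreover have "P ^ (j + m * totient (R ^ i)) = P ^ j * (P ^ totient (R ^ i)) ^ m"
    by (simp add: power_add power_mult[symmetric] mult.commute)
  ultimately have "[P ^ (j + m * totient (R ^ i)) = P ^ j] (mod R ^ i)" by simp
  then show ?thesis by (simp add: cong_iff_dvd_diff flip: cong_int_iff)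
qed

locale two_primes =
  fixes p0 p1 :: nat
  assumes p0: "prime p0" and p1: "prime p1" and distinct: "p0 \<noteq> p1"
begin

definition prime_at :: "nat \<Rightarrow> nat" where
  "prime_at n = (if even n then p0 else p1)"

lemma prime_at_gt_1: "prime_at n > 1"
  using p0 p1 prime_gt_1_nat by (simp add: prime_at_def)

lemma prime_at_Suc_Suc: "prime_at (Suc (Suc n)) = prime_at n"
  by (simp add: prime_at_def)

lemma coprime_prime_at: "coprime (prime_at n) (prime_at (Suc n))"
  using p0 p1 distinct by (simp add: prime_at_def primes_coprime)

lemma totient_prime_at_power_pos: "totient (prime_at n ^ k) > 0"
  using prime_at_gt_1[of n] by simp

definition step_factor :: "nat set \<Rightarrow> nat \<Rightarrow> nat" where
  "step_factor c n = (if n \<in> c then 2 else 1)"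

fun exponent :: "nat set \<Rightarrow> nat \<Rightarrow> nat" where
  "exponent c 0 = 0"
| "exponent c (Suc 0) = step_factor c 0"
| "exponent c (Suc (Suc n)) =
     exponent c n + step_factor c (Suc n) * totient (prime_at (Suc n) ^ exponent c (Suc n))"

lemma exponent_Suc_ge_1: "exponent c (Suc n) \<ge> 1"
proof (cases n)
  case (Suc m)
  have "step_factor c (Suc m) * totient (prime_at (Suc m) ^ exponent c (Suc m)) \<ge> 1"
    using totient_prime_at_power_pos by (simp add: step_factor_def Suc_le_eq)
  then show ?thesis unfolding Suc exponent.simps by linarith
qed (simp add: step_factor_def)

definition denominator :: "nat set \<Rightarrow> nat \<Rightarrow> int" where
  "denominator c n = int (prime_at n ^ exponent c n)"

lemma denominator_dvd: "denominator c (Suc n) dvd denominator c (Suc (Suc n)) - denominator c n"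
  using power_shift_by_totient_dvd[OF coprime_prime_at[of n]]
  by (simp add: denominator_def prime_at_Suc_Suc mult.commute)

lemma denominator_incr: "denominator c n < denominator c (Suc (Suc n))"
proof -
  have "exponent c n < exponent c (Suc (Suc n))"
    using totient_prime_at_power_pos by (simp add: step_factor_def)
  then show ?thesis
    using prime_at_gt_1[of n] by (simp add: denominator_def prime_at_Suc_Suc power_strict_increasing)
qed

lemma denominator_realizable: "\<exists>x. x \<notin> \<rat> \<and> cf_den x = denominator c"
proof (rule denominator_sequence_realizable)
  show "denominator c 0 = 1" by (simp add: denominator_def)
  show "denominator c n > 0" for n using prime_at_gt_1[of n] by (simp add: denominator_def)
qed (rule denominator_dvd denominator_incr)+

text \<open>Different choice sets give different exponent sequences, since each step factor can
  be read off from three consecutive exponents.\<close>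
lemma inj_denominator: "inj denominator"
proof (rule injI)
  fix c c'
  assume "denominator c = denominator c'"
  then have pow_eq: "prime_at n ^ exponent c n = prime_at n ^ exponent c' n" for n
    by (metis denominator_def of_nat_eq_iff)
  have exp_eq: "exponent c n = exponent c' n" for n
    using pow_eq[of n] by (simp add: power_inject_exp[OF prime_at_gt_1[of n]])
  have factor_eq: "step_factor c n = step_factor c' n" for n
  proof (cases n)
    case 0
    then show ?thesis using exp_eq[of 1] by simp
  next
    case (Suc k)
    then show ?thesis
      using exp_eq[of "Suc (Suc k)"] exp_eq[of k] exp_eq[of "Suc k"]
        totient_prime_at_power_pos[of "Suc k" "exponent c (Suc k)"] prime_at_gt_1[of "Suc k"]
      by simp
  qed
  have "n \<in> c \<longleftrightarrow> n \<in> c'" for n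
    using factor_eq[of n] by (auto simp: step_factor_def split: if_splits)
  then show "c = c'" by blast
qed

lemma denominator_shape:
  shows "\<exists>k. denominator c (2 * s) = int p0 ^ k \<and> (s \<ge> 1 \<longrightarrow> k \<ge> 1)"
    and "\<exists>k\<ge>1. denominator c (2 * s + 1) = int p1 ^ k"
proof -
  have "exponent c (2 * s) \<ge> 1" if "s \<ge> 1"
    using exponent_Suc_ge_1[of c "2 * s - 1"] that by simp
  then show "\<exists>k. denominator c (2 * s) = int p0 ^ k \<and> (s \<ge> 1 \<longrightarrow> k \<ge> 1)"
    by (intro exI[of _ "exponent c (2 * s)"]) (simp add: denominator_def prime_at_def)
  show "\<exists>k\<ge>1. denominator c (2 * s + 1) = int p1 ^ k"
    using exponent_Suc_ge_1[of c "2 * s"]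
    by (intro exI[of _ "exponent c (2 * s + 1)"]) (simp add: denominator_def prime_at_def)
qed

end

lemma uncountable_nat_sets: "uncountable (UNIV :: nat set set)"
proof
  assume "countable (UNIV :: nat set set)"
  then obtain f :: "nat \<Rightarrow> nat set" where "range f = Pow UNIV"
    using uncountable_def by (metis Pow_UNIV UNIV_not_empty)
  then show False using Cantors_theorem[of "UNIV :: nat set"] by blast
qed

theorem mainTheorem8:
  fixes p0 p1 :: nat
  assumes "prime p0" and "prime p1" and "p0 \<noteq> p1"
  shows "uncountable {x :: real. x \<notin> \<rat> \<and>
           (\<forall>s. (\<exists>k. cf_den x (2 * s) = int p0 ^ k \<and> (s \<ge> 1 \<longrightarrow> k \<ge> 1)) \<and>
                (\<exists>k\<ge>1. cf_den x (2 * s + 1) = int p1 ^ k))}"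
    (is "uncountable ?S")
proof
  interpret two_primes p0 p1 using assms by unfold_locales
  assume "countable ?S"
  have realized: "range denominator \<subseteq> cf_den ` ?S"
  proof
    fix d assume "d \<in> range denominator"
    then obtain c where d: "d = denominator c" by blast
    obtain x where x: "x \<notin> \<rat>" "cf_den x = denominator c" using denominator_realizable by blast
    then have "x \<in> ?S" using denominator_shape by simp
    then show "d \<in> cf_den ` ?S" unfolding d x(2)[symmetric] by (rule imageI)
  qed
  have "countable (cf_den ` ?S)" using \<open>countable ?S\<close> by (rule countable_image)
  then have "countable (range denominator)" by (rule countable_subset[OF realized])
  then have "countable (UNIV :: nat set set)" using inj_denominator by (rule countable_image_inj_on)
  then show False using uncountable_nat_sets by contradiction
qed

end
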